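(* Let $\Sigma$ be a finite alphabet, $\Omega$ a distribution of $\Sigma$ and $\mathsf{Obs}$ an observation function over $\Sigma$. Then $\Omega\models\mathsf{Obs}$ if and only if for every $\sigma\in\mathsf{Dom}(\mathsf{Obs})$, \[\mathsf{Obs}(\sigma)=\bigwedge_{\Sigma_i\in\Omega}\mathsf{Obs}_{\Sigma_i}(\sigma|_{\Sigma_i}),\] where $+$ is read as true and $-$ as false.
   Context: The projection $\sigma|_{\Sigma'}$ of a word $\sigma$ onto $\Sigma'\subseteq\Sigma$ is the subsequence of symbols of $\sigma$ lying in $\Sigma'$; for sets, $S|_{\Sigma'}=\{\sigma|_{\Sigma'}\mid\sigma\in S\}$. For languages $\mathcal L_i\subseteq\Sigma_i^\star$, $\|_{i=1}^n(\mathcal L_i,\Sigma_i)=\{\sigma\in(\bigcup_i\Sigma_i)^\star\mid\forall i.\ \sigma|_{\Sigma_i}\in\mathcal L_i\}$. A distribution of $\Sigma$ is a finite set $\Omega=\{\Sigma_1,\dots,\Sigma_n\}$ of subsets of $\Sigma$ with $\bigcup_i\Sigma_i=\Sigma$. A language $\mathcal L\subseteq\Sigma^\star$ is a product language over $\Omega$, written $\Omega\models\mathcal L$, if there are $\mathcal L_i\subseteq\Sigma_i^\star$ with $\mathcal L=\|_{i=1}^n(\mathcal L_i,\Sigma_i)$. An observation function over $\Sigma$ is a partial function $\mathsf{Obs}:\Sigma^\star\rightharpoonup\{+,-\}$ with finite domain $\mathsf{Dom}(\mathsf{Obs})$. A language $\mathcal L$ agrees with $\mathsf{Obs}$, written $\mathcal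 L\models\mathsf{Obs}$, if for all $\sigma\in\mathsf{Dom}(\mathsf{Obs})$: $\sigma\in\mathcal L\iff\mathsf{Obs}(\sigma)=+$. We write $\Omega\models\mathsf{Obs}$ if there exists $\mathcal L$ with $\Omega\models\mathcal L$ and $\mathcal L\models\mathsf{Obs}$. For $\Sigma'\subseteq\Sigma$, the local observation function $\mathsf{Obs}_{\Sigma'}$ has domain $\mathsf{Dom}(\mathsf{Obs})|_{\Sigma'}$ and, for $\sigma'$ in it, $\mathsf{Obs}_{\Sigma'}(\sigma')=+$ iff there is $\sigma\in\mathsf{Dom}(\mathsf{Obs})$ with $\sigma|_{\Sigma'}=\sigma'$ and $\mathsf{Obs}(\sigma)=+$, and $\mathsf{Obs}_{\Sigma'}(\sigma')=-$ otherwise. *)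

theory Defs
  imports Main
begin

definition proj :: "'a list \<Rightarrow> 'a set \<Rightarrow> 'a list" where
  "proj \<sigma> S = filter (\<lambda>x. x \<in> S) \<sigma>"

definition proj_set :: "'a list set \<Rightarrow> 'a set \<Rightarrow> 'a list set" where
  "proj_set W S = (\<lambda>\<sigma>. proj \<sigma> S) ` W"

definition sync_prod :: "'a set set \<Rightarrow> ('a set \<Rightarrow> 'a list set) \<Rightarrow> 'a list set" where
  "sync_prod \<Omega> Lf = {\<sigma> \<in> lists (\<Union>\<Omega>). \<forall>S\<in>\<Omega>. proj \<sigma> S \<in> Lf S}"

definition is_distribution :: "'a set \<Rightarrow> 'a set set \<Rightarrow> bool" where
  "is_distribution Sig \<Omega> \<longleftrightarrow> finite \<Omega> \<and> (\<forall>S\<in>\<Omega>. S \<subseteq> Sig) \<and> \<Union>\<Omega> = Sig"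

definition product_language :: "'a set set \<Rightarrow> 'a list set \<Rightarrow> bool" where
  "product_language \<Omega> L \<longleftrightarrow>
     (\<exists>Lf. (\<forall>S\<in>\<Omega>. Lf S \<subseteq> lists S) \<and> L = sync_prod \<Omega> Lf)"

text \<open>Observation functions: partial maps from words to \<open>{+,-}\<close>, with \<open>+\<close> encoded as
 \<open>True\<close> and \<open>-\<close> as \<open>False\<close>.\<close>

type_synonym 'a obs = "'a list \<Rightarrow> bool option"

definition is_obs :: "'a set \<Rightarrow> 'a obs \<Rightarrow> bool" where
  "is_obs Sig Obs \<longleftrightarrow> finite (dom Obs) \<and> dom Obs \<subseteq> lists Sig"

definition agrees :: "'a list set \<Rightarrow> 'a obs \<Rightarrow> bool" where
  "agrees L Obs \<longleftrightarrow> (\<forall>\<sigma>\<in>dom Obs. (\<sigma> \<in> L \<longleftrightarrow> Obs \<sigma> = Some True))"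

definition dist_models_obs :: "'a set set \<Rightarrow> 'a obs \<Rightarrow> bool" where
  "dist_models_obs \<Omega> Obs \<longleftrightarrow> (\<exists>L. product_language \<Omega> L \<and> agrees L Obs)"

definition local_obs :: "'a obs \<Rightarrow> 'a set \<Rightarrow> 'a obs" where
  "local_obs Obs S = (\<lambda>\<sigma>'. if \<sigma>' \<in> proj_set (dom Obs) S
       then Some (\<exists>\<sigma>\<in>dom Obs. proj \<sigma> S = \<sigma>' \<and> Obs \<sigma> = Some True)
       else None)"

end

theory Submission
  imports Defs
begin

text \<open>For each component \<open>S\<close> take as local language the projections of the positively
  observed words. The resulting product language is the least product language containing
  all positive observations, so \<open>Obs\<close> is realisable over \<open>\<Omega>\<close> iff this canonical candidate
  agrees with it, and membership of an observed word in the candidate is exactly the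
  conjunction of the local observations.\<close>

definition positive_projections :: "'a obs \<Rightarrow> 'a set \<Rightarrow> 'a list set" where
  "positive_projections Obs S = {proj \<tau> S | \<tau>. \<tau> \<in> dom Obs \<and> Obs \<tau> = Some True}"

lemma positive_projections_subset_lists: "positive_projections Obs S \<subseteq> lists S"
  unfolding positive_projections_def proj_def by auto

lemma sync_prod_mono:
  assumes "\<And>S. S \<in> \<Omega> \<Longrightarrow> A S \<subseteq> B S"
  shows "sync_prod \<Omega> A \<subseteq> sync_prod \<Omega> B"
  using assms unfolding sync_prod_def by blast

lemma local_obs_proj_eq_Some_True_iff:
  assumes "\<sigma> \<in> dom Obs"
  shows "local_obs Obs S (proj \<sigma> S) = Some True \<longleftrightarrow> proj \<sigma> S \<in> positive_projections Obs S"
proof -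
  have "proj \<sigma> S \<in> proj_set (dom Obs) S"
    using assms unfolding proj_set_def by blast
  then show ?thesis
    unfolding local_obs_def positive_projections_def by (simp add: eq_commute) blast
qed

lemma mem_sync_prod_positive_projections_iff:
  assumes "\<sigma> \<in> dom Obs" and "\<sigma> \<in> lists (\<Union>\<Omega>)"
  shows "\<sigma> \<in> sync_prod \<Omega> (positive_projections Obs) \<longleftrightarrow>
    (\<forall>S\<in>\<Omega>. local_obs Obs S (proj \<sigma> S) = Some True)"
  using assms local_obs_proj_eq_Some_True_iff[OF assms(1)] unfolding sync_prod_def by auto

lemma positive_projections_subset_if_agrees:
  assumes "agrees (sync_prod \<Omega> Lf) Obs" and "S \<in> \<Omega>"
  shows "positive_projections Obs S \<subseteq> Lf S"
  using assms unfolding positive_projections_def agrees_def sync_prod_def by auto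

lemma positive_in_sync_prod_positive_projections:
  assumes "Obs \<sigma> = Some True" and "\<sigma> \<in> lists (\<Union>\<Omega>)"
  shows "\<sigma> \<in> sync_prod \<Omega> (positive_projections Obs)"
  using assms unfolding sync_prod_def positive_projections_def by blast

lemma dist_models_obs_iff_agrees_positive_projections:
  assumes "dom Obs \<subseteq> lists (\<Union>\<Omega>)"
  shows "dist_models_obs \<Omega> Obs \<longleftrightarrow> agrees (sync_prod \<Omega> (positive_projections Obs)) Obs"
proof
  assume "dist_models_obs \<Omega> Obs"
  then obtain Lf where agrees_Lf: "agrees (sync_prod \<Omega> Lf) Obs"
    unfolding dist_models_obs_def product_language_def by auto
  have least: "sync_prod \<Omega> (positive_projections Obs) \<subseteq> sync_prod \<Omega> Lf"
    by (rule sync_prod_mono) (rule positive_projections_subset_if_agrees[OF agrees_Lf])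
  show "agrees (sync_prod \<Omega> (positive_projections Obs)) Obs"
    unfolding agrees_def
  proof (intro ballI iffI)
    fix \<sigma> assume "\<sigma> \<in> dom Obs" and "\<sigma> \<in> sync_prod \<Omega> (positive_projections Obs)"
    then have "\<sigma> \<in> sync_prod \<Omega> Lf"
      using least by blast
    then show "Obs \<sigma> = Some True"
      using agrees_Lf \<open>\<sigma> \<in> dom Obs\<close> unfolding agrees_def by blast
  next
    fix \<sigma> assume "\<sigma> \<in> dom Obs" and "Obs \<sigma> = Some True"
    then show "\<sigma> \<in> sync_prod \<Omega> (positive_projections Obs)"
      using assms by (intro positive_in_sync_prod_positive_projections) auto
  qed
next
  assume "agrees (sync_prod \<Omega> (positive_projections Obs)) Obs"
  moreover have "product_language \<Omega> (sync_prod \<Omega> (positive_projections Obs))"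
    unfolding product_language_def using positive_projections_subset_lists by blast
  ultimately show "dist_models_obs \<Omega> Obs"
    unfolding dist_models_obs_def by blast
qed

theorem mainTheorem3:
  fixes Sig :: "'a set" and \<Omega> :: "'a set set" and Obs :: "'a obs"
  assumes "finite Sig"
    and "is_distribution Sig \<Omega>"
    and "is_obs Sig Obs"
  shows "dist_models_obs \<Omega> Obs \<longleftrightarrow>
    (\<forall>\<sigma>\<in>dom Obs. Obs \<sigma> = Some (\<forall>S\<in>\<Omega>. local_obs Obs S (proj \<sigma> S) = Some True))"
proof -
  have words: "dom Obs \<subseteq> lists (\<Union>\<Omega>)"
    using assms(2,3) unfolding is_distribution_def is_obs_def by auto
  have "dist_models_obs \<Omega> Obs \<longleftrightarrow>
      (\<forall>\<sigma>\<in>dom Obs. \<sigma> \<in> sync_prod \<Omega> (positive_projections Obs) \<longleftrightarrow> Obs \<sigma> = Some True)"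
    using dist_models_obs_iff_agrees_positive_projections[OF words] unfolding agrees_def .
  also have "\<dots> \<longleftrightarrow>
      (\<forall>\<sigma>\<in>dom Obs. Obs \<sigma> = Some (\<forall>S\<in>\<Omega>. local_obs Obs S (proj \<sigma> S) = Some True))"
  proof (intro ball_cong refl)
    fix \<sigma> assume "\<sigma> \<in> dom Obs"
    then obtain b where "Obs \<sigma> = Some b" by blast
    moreover have "\<sigma> \<in> sync_prod \<Omega> (positive_projections Obs) \<longleftrightarrow>
        (\<forall>S\<in>\<Omega>. local_obs Obs S (proj \<sigma> S) = Some True)"
      using \<open>\<sigma> \<in> dom Obs\<close> words by (intro mem_sync_prod_positive_projections_iff) auto
    ultimately show "(\<sigma> \<in> sync_prod \<Omega> (positive_projections Obs) \<longleftrightarrow> Obs \<sigma> = Some True) \<longleftrightarrow>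
        Obs \<sigma> = Some (\<forall>S\<in>\<Omega>. local_obs Obs S (proj \<sigma> S) = Some True)"
      by (simp add: eq_commute)
  qed
  finally show ?thesis .
qed

end
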